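(* Let $n\ge 2$. The function $\mathbf{H}:[0,1]^n\to[0,1]$ has no zero divisor, i.e. there is no $a\in\,]0,1[$ such that $\mathbf{H}(\mathbf{x})=0$ for every $\mathbf{x}\in\,]0,1]^n$ having $a$ as one of its coordinates.
   Context: For $\mathbf{x}\in[0,1]^n$ let $x_{(1)}\ge\dots\ge x_{(n)}$ be its entries in decreasing order, and define the median $Med(\mathbf{x})=\frac12(x_{(k)}+x_{(k+1)})$ if $n=2k$ and $Med(\mathbf{x})=x_{(k+1)}$ if $n=2k+1$. Define $f_i(\mathbf{x})=\frac1n$ if $x_1=\dots=x_n$, and otherwise $f_i(\mathbf{x})=\frac{1}{n-1}\Big(1-\frac{|x_i-Med(\mathbf{x})|}{\sum_{j=1}^n|x_j-Med(\mathbf{x})|}\Big)$. Then $\mathbf{H}(\mathbf{x})=\sum_{i=1}^n f_i(\mathbf{x})\,x_i$. *)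

theory Defs
  imports Complex_Main
begin

text \<open>Vectors x in [0,1]^n are represented as functions nat => real; only the
  coordinates x 0, ..., x (n-1) are used.  The decreasing order statistic
  x_(j) (1 <= j <= n) is the j-th largest coordinate.\<close>

definition ord_stat :: "nat \<Rightarrow> (nat \<Rightarrow> real) \<Rightarrow> nat \<Rightarrow> real" where
  "ord_stat n x j = rev (sort (map x [0..<n])) ! (j - 1)"

definition Med :: "nat \<Rightarrow> (nat \<Rightarrow> real) \<Rightarrow> real" where
  "Med n x = (if even n then (ord_stat n x (n div 2) + ord_stat n x (n div 2 + 1)) / 2
              else ord_stat n x (n div 2 + 1))"

definition fw :: "nat \<Rightarrow> (nat \<Rightarrow> real) \<Rightarrow> nat \<Rightarrow> real" where
  "fw n x i = (if (\<forall>j<n. \<forall>k<n. x j = x k) then 1 / real n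
     else (1 / (real n - 1)) * (1 - \<bar>x i - Med n x\<bar> / (\<Sum>j<n. \<bar>x j - Med n x\<bar>)))"

definition H :: "nat \<Rightarrow> (nat \<Rightarrow> real) \<Rightarrow> real" where
  "H n x = (\<Sum>i<n. fw n x i * x i)"

end

theory Submission
  imports Defs
begin

lemma H_const:
  assumes "n > 0"
  shows "H n (\<lambda>_. c) = c"
  using assms by (simp add: H_def fw_def)

theorem proposition14:
  fixes n :: nat
  assumes "n \<ge> 2"
  shows "\<not> (\<exists>a::real. 0 < a \<and> a < 1 \<and>
           (\<forall>x :: nat \<Rightarrow> real. (\<forall>i<n. 0 < x i \<and> x i \<le> 1) \<and> (\<exists>i<n. x i = a)
              \<longrightarrow> H n x = 0))"
proof
  assume "\<exists>a::real. 0 < a \<and> a < 1 \<and>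
           (\<forall>x :: nat \<Rightarrow> real. (\<forall>i<n. 0 < x i \<and> x i \<le> 1) \<and> (\<exists>i<n. x i = a)
              \<longrightarrow> H n x = 0)"
  then obtain a :: real where a: "0 < a" "a < 1" and
    zero_divisor: "\<And>x :: nat \<Rightarrow> real. (\<forall>i<n. 0 < x i \<and> x i \<le> 1) \<and> (\<exists>i<n. x i = a) \<Longrightarrow> H n x = 0"
    by blast
  have "H n (\<lambda>_. a) = 0"
    using a assms by (intro zero_divisor) (auto intro!: exI[of _ 0])
  moreover have "H n (\<lambda>_. a) = a"
    using assms by (intro H_const) simp
  ultimately show False
    using a by simp
qed

end
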